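(* Let $G$ be a finite simple graph, let $C$ be an induced cycle in $G$, and let $n\geq 2$ be an integer such that at most $n$ vertices of $C$ are adjacent to vertices of $G\setminus C$. Let $c$ be a number such that $\mathbf{c}(H)\leq c$ for every induced subgraph $H$ of $G\setminus C$. Then $\mathbf{c}(G)\leq c\,\ell(n)$.
   Context: For a finite simple graph $G$, its independence complex $\mathrm{Ind}(G)$ is the set of all independent vertex subsets of $G$ (including the empty set), partially ordered by inclusion. A matching on this poset is a set of pairs $\{\sigma,\tau\}$ of elements with $\tau$ covering $\sigma$ (i.e. $\sigma\subset\tau$, $|\tau|=|\sigma|+1$), such that distinct pairs are disjoint. A sequence of $n>1$ distinct pairs $\{\sigma_1\subset\tau_1\},\ldots,\{\sigma_n\subset\tau_n\}$ of the matching is a cycle if $\tau_i\supset\sigma_{i+1}$ for $1\leq i<n$ and $\tau_n\supset\sigma_1$; the matching is acyclic if it has no cycles. Elements of $\mathrm{Ind}(G)$ not in any matched pair are critical. $\mathbf{c}(G)$ denotes the minimal number of critical elements over all acyclic matchings on $\mathrm{Ind}(G)$. $G\setminus C$ denotes the induced subgraph on the vertices not in $C$. The Fibonacci numbers are $\varphi(0)=0$, $\varphi(1)=1$, $\varphi(n)=\varphi(n-1)+\varphi(n-2)$, and the Lucas numbers are $\ell(n)=\varphi(n-1)+\varphi(n+1)$. *)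

theory Defs
  imports Complex_Main "HOL-Number_Theory.Fib"
begin

definition simple_graph :: "'a set \<Rightarrow> ('a \<Rightarrow> 'a \<Rightarrow> bool) \<Rightarrow> bool" where
  "simple_graph V E \<longleftrightarrow> finite V \<and> (\<forall>x y. E x y \<longrightarrow> x \<in> V \<and> y \<in> V)
     \<and> (\<forall>x y. E x y \<longrightarrow> E y x) \<and> (\<forall>x. \<not> E x x)"

definition Ind :: "'a set \<Rightarrow> ('a \<Rightarrow> 'a \<Rightarrow> bool) \<Rightarrow> 'a set set" where
  "Ind W E = {S. S \<subseteq> W \<and> (\<forall>x\<in>S. \<forall>y\<in>S. \<not> E x y)}"

definition is_matching :: "'a set set \<Rightarrow> ('a set \<times> 'a set) set \<Rightarrow> bool" where
  "is_matching P M \<longleftrightarrow>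
     (\<forall>(s,t)\<in>M. s \<in> P \<and> t \<in> P \<and> s \<subset> t \<and> card t = card s + 1) \<and>
     (\<forall>p\<in>M. \<forall>q\<in>M. p \<noteq> q \<longrightarrow> {fst p, snd p} \<inter> {fst q, snd q} = {})"

definition is_cycle :: "('a set \<times> 'a set) set \<Rightarrow> ('a set \<times> 'a set) list \<Rightarrow> bool" where
  "is_cycle M ps \<longleftrightarrow> length ps > 1 \<and> distinct ps \<and> set ps \<subseteq> M \<and>
     (\<forall>i < length ps. snd (ps ! i) \<supset> fst (ps ! ((i + 1) mod length ps)))"

definition acyclic_matching :: "'a set set \<Rightarrow> ('a set \<times> 'a set) set \<Rightarrow> bool" where
  "acyclic_matching P M \<longleftrightarrow> is_matching P M \<and> (\<nexists>ps. is_cycle M ps)"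

definition critical :: "'a set set \<Rightarrow> ('a set \<times> 'a set) set \<Rightarrow> 'a set set" where
  "critical P M = {s \<in> P. \<forall>p\<in>M. s \<noteq> fst p \<and> s \<noteq> snd p}"

definition cmin :: "'a set \<Rightarrow> ('a \<Rightarrow> 'a \<Rightarrow> bool) \<Rightarrow> nat" where
  "cmin W E = Min {card (critical (Ind W E) M) | M. acyclic_matching (Ind W E) M}"

definition induced_cycle :: "'a set \<Rightarrow> ('a \<Rightarrow> 'a \<Rightarrow> bool) \<Rightarrow> 'a set \<Rightarrow> bool" where
  "induced_cycle V E C \<longleftrightarrow> C \<subseteq> V \<and> (\<exists>vs. distinct vs \<and> set vs = C \<and> length vs \<ge> 3 \<and>
     (\<forall>i < length vs. \<forall>j < length vs. E (vs ! i) (vs ! j) \<longleftrightarrow>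
        (j = (i + 1) mod length vs \<or> i = (j + 1) mod length vs)))"

definition lucas :: "nat \<Rightarrow> nat" where
  "lucas n = fib (n - 1) + fib (n + 1)"

end

theory Submission
  imports Defs
begin

text \<open>Splitting the independence complex at a vertex v, i.e. pairing \<sigma> with \<sigma> \<union> {v},
  gives c(G) \<le> c(G - v) + c(G - N[v]), and a vertex without neighbours gives c(G) = 0.
  Along an induced path whose vertices are marked True when attached to the rest W of the
  graph, these two rules bound c(W \<union> path) by c times the path count of the attachment word.
  Splitting the cycle at an attached vertex leaves the paths C - v and C - N[v]; the sum of
  their path counts is the trace of a product of 2\<times>2 transfer matrices, one per attached
  vertex, each equal to F, JFJ or I (F the Fibonacci matrix, J the swap). Such a product is
  dominated entrywise by J^e F^k J^f with k at most the number of attached vertices,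
  and the trace of the latter is at most the Lucas number L(n).\<close>

section \<open>Acyclic matchings on independence complexes\<close>

lemma finite_Ind: "finite W \<Longrightarrow> finite (Ind W E)"
  by (rule finite_subset[of _ "Pow W"]) (auto simp: Ind_def)

lemma is_matching_iff:
  "is_matching P M \<longleftrightarrow>
     (\<forall>p\<in>M. fst p \<in> P \<and> snd p \<in> P \<and> fst p \<subset> snd p \<and> card (snd p) = card (fst p) + 1) \<and>
     (\<forall>p\<in>M. \<forall>q\<in>M. p \<noteq> q \<longrightarrow> {fst p, snd p} \<inter> {fst q, snd q} = {})"
  unfolding is_matching_def by (simp add: case_prod_beta)

lemma is_matching_pairD:
  assumes "is_matching P M" "p \<in> M"
  shows "fst p \<in> P" "snd p \<in> P" "fst p \<subset> snd p" "card (snd p) = card (fst p) + 1"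
  using assms by (cases p; auto simp: is_matching_def)+

lemma is_matching_disjointD:
  assumes "is_matching P M" "p \<in> M" "q \<in> M" "p \<noteq> q"
  shows "{fst p, snd p} \<inter> {fst q, snd q} = {}"
proof -
  have "\<forall>p\<in>M. \<forall>q\<in>M. p \<noteq> q \<longrightarrow> {fst p, snd p} \<inter> {fst q, snd q} = {}"
    using assms(1) unfolding is_matching_iff by (rule conjunct2)
  then show ?thesis using assms(2-4) by simp
qed

lemma is_matching_mono: "P \<subseteq> P' \<Longrightarrow> is_matching P M \<Longrightarrow> is_matching P' M"
  unfolding is_matching_iff by (meson subsetD)

lemma is_matching_Un:
  assumes "is_matching P M1" "is_matching P M2"
    and "\<And>p q. p \<in> M1 \<Longrightarrow> q \<in> M2 \<Longrightarrow> {fst p, snd p} \<inter> {fst q, snd q} = {}"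
  shows "is_matching P (M1 \<union> M2)"
  unfolding is_matching_iff
proof (rule conjI; intro ballI impI)
  fix p assume "p \<in> M1 \<union> M2"
  then show "fst p \<in> P \<and> snd p \<in> P \<and> fst p \<subset> snd p \<and> card (snd p) = card (fst p) + 1"
    by (elim UnE) (use is_matching_pairD[OF assms(1)] is_matching_pairD[OF assms(2)] in simp_all)
next
  fix p q assume "p \<in> M1 \<union> M2" "q \<in> M1 \<union> M2" "p \<noteq> q"
  then show "{fst p, snd p} \<inter> {fst q, snd q} = {}"
    using assms unfolding is_matching_iff by (metis Int_commute UnE)
qed

lemma is_matching_avoid:
  "is_matching P M \<Longrightarrow> \<forall>S\<in>P. v \<notin> S \<Longrightarrow> \<forall>p\<in>M. v \<notin> fst p \<and> v \<notin> snd p"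
  by (meson is_matching_pairD(1,2))

lemma is_cycle_mono: "is_cycle M ps \<Longrightarrow> set ps \<subseteq> M' \<Longrightarrow> is_cycle M' ps"
  by (simp add: is_cycle_def)

lemma acyclic_matching_empty: "acyclic_matching P {}"
  by (auto simp: acyclic_matching_def is_matching_def is_cycle_def)

lemma finite_critical_cards:
  "finite W \<Longrightarrow> finite {card (critical (Ind W E) M) | M. acyclic_matching (Ind W E) M}"
  by (rule finite_subset[of _ "{..card (Ind W E)}"])
     (auto intro!: card_mono finite_Ind simp: critical_def)

lemma finite_critical: "finite W \<Longrightarrow> finite (critical (Ind W E) M)"
  by (rule finite_subset[OF _ finite_Ind]) (auto simp: critical_def)

lemma cmin_le:
  "finite W \<Longrightarrow> acyclic_matching (Ind W E) M \<Longrightarrow> cmin W E \<le> card (critical (Ind W E) M)"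
  unfolding cmin_def by (rule Min_le) (auto simp: finite_critical_cards)

lemma cmin_attained:
  assumes "finite W"
  obtains M where "acyclic_matching (Ind W E) M" "card (critical (Ind W E) M) = cmin W E"
proof -
  have "cmin W E \<in> {card (critical (Ind W E) M) | M. acyclic_matching (Ind W E) M}"
    unfolding cmin_def using assms acyclic_matching_empty
    by (intro Min_in finite_critical_cards) auto
  then show ?thesis using that by auto
qed

section \<open>Cones and vertex splitting\<close>

lemma cyclic_propagate:
  assumes "(\<And>j. j < n \<Longrightarrow> P j \<Longrightarrow> P (Suc j mod n))" "i < n" "P i" "j < n"
  shows "P j"
proof -
  have "P ((i + d) mod n)" for d
  proof (induction d)
    case 0 then show ?case using assms by simp
  next
    case (Suc d)
    then have "P (Suc ((i + d) mod n) mod n)" using assms(1,2) by simp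
    then show ?case by (simp add: mod_Suc_eq)
  qed
  from this[of "j + n - i"] show ?thesis using assms by simp
qed

lemma no_cycle_insert_pairs:
  assumes "\<forall>p\<in>M. snd p = insert v (fst p) \<and> v \<notin> fst p"
  shows "\<nexists>ps. is_cycle M ps"
proof
  assume "\<exists>ps. is_cycle M ps"
  then obtain ps where cycle: "is_cycle M ps" ..
  define n where "n = length ps"
  have n: "1 < n" "distinct ps" using cycle by (auto simp: is_cycle_def n_def)
  have "ps ! j \<in> M" if "j < n" for j
    using cycle that nth_mem unfolding is_cycle_def n_def by blast
  then have pair: "snd (ps ! j) = insert v (fst (ps ! j)) \<and> v \<notin> fst (ps ! j)" if "j < n" for j
    using assms that by blast
  \<comment> \<open>the first components decrease weakly around the cycle, hence are all equal\<close>
  have "fst (ps ! j) \<subseteq> fst (ps ! i)" if "i < n" "j < n" for i j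
  proof (rule cyclic_propagate[of n "\<lambda>k. fst (ps ! k) \<subseteq> fst (ps ! i)" i])
    fix k assume k: "k < n" "fst (ps ! k) \<subseteq> fst (ps ! i)"
    have "fst (ps ! (Suc k mod n)) \<subset> snd (ps ! k)"
      using cycle k(1) by (simp add: is_cycle_def n_def)
    then have "fst (ps ! (Suc k mod n)) \<subseteq> insert v (fst (ps ! k))"
      using pair[OF k(1)] by auto
    moreover have "v \<notin> fst (ps ! (Suc k mod n))"
      using pair[of "Suc k mod n"] n(1) by simp
    ultimately show "fst (ps ! (Suc k mod n)) \<subseteq> fst (ps ! i)"
      using k(2) by blast
  qed (use that in auto)
  then have "fst (ps ! 0) = fst (ps ! 1)"
    using n(1) by (simp add: subset_antisym)
  then have "ps ! 0 = ps ! 1"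
    using pair[of 0] pair[of 1] n(1) by (simp add: prod_eq_iff)
  then show False using n nth_eq_iff_index_eq[of ps 0 1] by (force simp: n_def)
qed

lemma cmin_isolated_vertex:
  assumes "finite X" "v \<in> X" "\<forall>y\<in>X. \<not> E v y" "symp E"
  shows "cmin X E = 0"
proof -
  define M where "M = (\<lambda>S. (S, insert v S)) ` {S \<in> Ind X E. v \<notin> S}"
  have insert_Ind: "insert v S \<in> Ind X E" if "S \<in> Ind X E" for S
    using that assms(2-4) unfolding Ind_def by (blast dest: sympD)
  have "finite S" if "S \<in> Ind X E" for S
    using that assms(1) unfolding Ind_def by (auto intro: finite_subset)
  moreover have "S = S'" if "insert v S = insert v S'" "v \<notin> S" "v \<notin> S'" for S S'
    using that by (metis Diff_insert_absorb)
  ultimately have matching: "is_matching (Ind X E) M"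
    using insert_Ind unfolding is_matching_def M_def by auto
  have "\<exists>p\<in>M. S = fst p \<or> S = snd p" if "S \<in> Ind X E" for S
  proof (cases "v \<in> S")
    case True
    then have "(S - {v}, S) \<in> M"
      using that unfolding M_def Ind_def by (auto intro!: image_eqI[of _ _ "S - {v}"])
    then show ?thesis by force
  next
    case False
    then have "(S, insert v S) \<in> M" using that unfolding M_def by auto
    then show ?thesis by force
  qed
  then have "critical (Ind X E) M = {}" by (auto simp: critical_def)
  moreover have "\<nexists>ps. is_cycle M ps"
    by (rule no_cycle_insert_pairs) (auto simp: M_def)
  ultimately show ?thesis
    using cmin_le[OF assms(1), of E M] matching by (simp add: acyclic_matching_def)
qed

lemma doubleton_disjoint_iff: "{a, b} \<inter> {c, d} = {} \<longleftrightarrow> a \<noteq> c \<and> a \<noteq> d \<and> b \<noteq> c \<and> b \<noteq> d"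
  by auto

lemma is_matching_insert_image:
  assumes "is_matching P M" "\<forall>S\<in>P. v \<notin> S" "insert v ` P \<subseteq> P'"
  shows "is_matching P' (map_prod (insert v) (insert v) ` M)"
  unfolding is_matching_iff
proof (rule conjI; intro ballI impI)
  fix p' assume "p' \<in> map_prod (insert v) (insert v) ` M"
  then obtain p where p: "p \<in> M" "p' = map_prod (insert v) (insert v) p" ..
  note pair = is_matching_pairD[OF assms(1) p(1)]
  have "v \<notin> fst p" "v \<notin> snd p"
    using pair(1,2) assms(2) by auto
  have "finite (snd p)"
  proof (rule ccontr)
    assume "infinite (snd p)"
    then show False using pair(4) by simp
  qed
  then have "finite (fst p)"
    using pair(3) by (meson finite_subset psubset_imp_subset)
  have "insert v (fst p) \<subset> insert v (snd p)"
    using pair(3) \<open>v \<notin> snd p\<close> by auto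
  moreover have "card (insert v (snd p)) = card (insert v (fst p)) + 1"
    using pair(4) \<open>finite (snd p)\<close> \<open>finite (fst p)\<close> \<open>v \<notin> fst p\<close> \<open>v \<notin> snd p\<close> by simp
  moreover have "insert v (fst p) \<in> P'" "insert v (snd p) \<in> P'"
    using assms(3) pair(1,2) by blast+
  ultimately show "fst p' \<in> P' \<and> snd p' \<in> P' \<and> fst p' \<subset> snd p' \<and> card (snd p') = card (fst p') + 1"
    using p(2) by simp
next
  fix p' q' assume "p' \<in> map_prod (insert v) (insert v) ` M" "q' \<in> map_prod (insert v) (insert v) ` M"
    and "p' \<noteq> q'"
  obtain p where p: "p \<in> M" "p' = map_prod (insert v) (insert v) p"
    using \<open>p' \<in> _\<close> by (rule imageE)
  obtain q where q: "q \<in> M" "q' = map_prod (insert v) (insert v) q"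
    using \<open>q' \<in> _\<close> by (rule imageE)
  have "p \<noteq> q" using \<open>p' \<noteq> q'\<close> p(2) q(2) by auto
  then have "{fst p, snd p} \<inter> {fst q, snd q} = {}"
    using is_matching_disjointD[OF assms(1) p(1) q(1)] by simp
  then have "fst p \<noteq> fst q \<and> fst p \<noteq> snd q \<and> snd p \<noteq> fst q \<and> snd p \<noteq> snd q"
    unfolding doubleton_disjoint_iff .
  moreover have "v \<notin> fst p" "v \<notin> snd p" "v \<notin> fst q" "v \<notin> snd q"
    using is_matching_pairD(1,2)[OF assms(1) p(1)] is_matching_pairD(1,2)[OF assms(1) q(1)] assms(2)
    by auto
  ultimately show "{fst p', snd p'} \<inter> {fst q', snd q'} = {}"
    unfolding p(2) q(2) doubleton_disjoint_iff by (simp add: insert_ident)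
qed

lemma is_cycle_remove_insert_image:
  assumes cycle: "is_cycle (map_prod (insert v) (insert v) ` M) ps"
    and avoid: "\<forall>p\<in>M. v \<notin> fst p \<and> v \<notin> snd p"
  shows "is_cycle M (map (map_prod (\<lambda>S. S - {v}) (\<lambda>S. S - {v})) ps)"
proof -
  define remove where "remove = map_prod (\<lambda>S::'a set. S - {v}) (\<lambda>S. S - {v})"
  have remove_lift: "remove (map_prod (insert v) (insert v) p) = p" if "p \<in> M" for p
  proof -
    have "v \<notin> fst p" "v \<notin> snd p" using avoid that by auto
    then show ?thesis by (simp add: remove_def prod_eq_iff Diff_insert_absorb)
  qed
  have ps: "set ps \<subseteq> map_prod (insert v) (insert v) ` M"
    using cycle by (simp add: is_cycle_def)
  have "inj_on remove (set ps)"
  proof (rule inj_onI)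
    fix x y assume "x \<in> set ps" "y \<in> set ps" "remove x = remove y"
    moreover obtain p where "p \<in> M" "x = map_prod (insert v) (insert v) p"
      using subsetD[OF ps \<open>x \<in> set ps\<close>] by (rule imageE)
    moreover obtain q where "q \<in> M" "y = map_prod (insert v) (insert v) q"
      using subsetD[OF ps \<open>y \<in> set ps\<close>] by (rule imageE)
    ultimately show "x = y" using remove_lift by metis
  qed
  moreover have "set (map remove ps) \<subseteq> M"
    using ps remove_lift by auto
  moreover have "snd (map remove ps ! i) \<supset> fst (map remove ps ! (Suc i mod length ps))"
    if "i < length ps" for i
  proof -
    have succ: "Suc i mod length ps < length ps" using that by (intro mod_less_divisor) linarith
    then have "v \<in> fst (ps ! (Suc i mod length ps))"
      using ps nth_mem by fastforce
    moreover have "snd (ps ! i) \<supset> fst (ps ! (Suc i mod length ps))"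
      using cycle that by (simp add: is_cycle_def)
    ultimately show ?thesis using that succ by (auto simp: remove_def)
  qed
  ultimately show ?thesis
    using cycle unfolding remove_def[symmetric] by (simp add: is_cycle_def distinct_map)
qed

lemma no_cycle_Un_insert_image:
  assumes "\<nexists>ps. is_cycle M1 ps" "\<nexists>ps. is_cycle M2 ps"
    and avoid1: "\<forall>p\<in>M1. v \<notin> fst p \<and> v \<notin> snd p"
    and avoid2: "\<forall>p\<in>M2. v \<notin> fst p \<and> v \<notin> snd p"
  shows "\<nexists>ps. is_cycle (M1 \<union> map_prod (insert v) (insert v) ` M2) ps"
proof
  let ?L = "map_prod (insert v) (insert v) ` M2"
  assume "\<exists>ps. is_cycle (M1 \<union> ?L) ps"
  then obtain ps where cycle: "is_cycle (M1 \<union> ?L) ps" ..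
  define n where "n = length ps"
  have "set ps \<subseteq> M1 \<union> ?L" using cycle by (simp add: is_cycle_def)
  then have member: "ps ! j \<in> M1 \<or> ps ! j \<in> ?L" if "j < n" for j
    using that nth_mem[of j ps] unfolding n_def by blast
  have lifted: "v \<in> fst p" if "p \<in> ?L" for p
    using that by (elim imageE) simp
  have all_nth: "set ps \<subseteq> M" if "\<And>j. j < n \<Longrightarrow> ps ! j \<in> M" for M
    using that by (metis in_set_conv_nth n_def subsetI)
  show False
  proof (cases "\<exists>i<n. v \<notin> fst (ps ! i)")
    case True
    then obtain i where i: "i < n" "v \<notin> fst (ps ! i)" by blast
    have in_M1: "ps ! k \<in> M1" if "k < n" "v \<notin> fst (ps ! k)" for k
      using member[OF that(1)] lifted[of "ps ! k"] that(2) by metis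
    \<comment> \<open>a pair avoiding v lies in M1, so its successor avoids v as well\<close>
    have "v \<notin> fst (ps ! j)" if "j < n" for j
    proof (rule cyclic_propagate[of n "\<lambda>k. v \<notin> fst (ps ! k)" i])
      fix k assume k: "k < n" "v \<notin> fst (ps ! k)"
      have "v \<notin> snd (ps ! k)" using avoid1 in_M1[OF k] by blast
      moreover have "fst (ps ! (Suc k mod n)) \<subset> snd (ps ! k)"
        using cycle k(1) by (simp add: is_cycle_def n_def)
      ultimately show "v \<notin> fst (ps ! (Suc k mod n))" by blast
    qed (use i that in auto)
    then have "set ps \<subseteq> M1" using in_M1 all_nth by blast
    then show False using assms(1) is_cycle_mono[OF cycle] by blast
  next
    case False
    then have "ps ! j \<in> ?L" if "j < n" for j
      using member[OF that] avoid1 that by metis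
    then have "set ps \<subseteq> ?L" using all_nth by blast
    then show False
      using assms(2) is_cycle_remove_insert_image[OF is_cycle_mono[OF cycle] avoid2] by blast
  qed
qed

lemma acyclic_matching_Un_insert_image:
  assumes "acyclic_matching P1 M1" "acyclic_matching P2 M2" "P1 \<subseteq> P" "insert v ` P2 \<subseteq> P"
    and "\<forall>S\<in>P1. v \<notin> S" "\<forall>S\<in>P2. v \<notin> S"
  shows "acyclic_matching P (M1 \<union> map_prod (insert v) (insert v) ` M2)"
proof -
  let ?L = "map_prod (insert v) (insert v) ` M2"
  have m1: "is_matching P1 M1" and c1: "\<nexists>ps. is_cycle M1 ps"
    using assms(1) by (simp_all add: acyclic_matching_def)
  have m2: "is_matching P2 M2" and c2: "\<nexists>ps. is_cycle M2 ps"
    using assms(2) by (simp_all add: acyclic_matching_def)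
  note avoid1 = is_matching_avoid[OF m1 assms(5)] and avoid2 = is_matching_avoid[OF m2 assms(6)]
  have "is_matching P (M1 \<union> ?L)"
  proof (rule is_matching_Un)
    show "is_matching P M1" by (rule is_matching_mono[OF assms(3) m1])
    show "is_matching P ?L" by (rule is_matching_insert_image[OF m2 assms(6,4)])
  next
    fix p q assume "p \<in> M1" "q \<in> ?L"
    then have "v \<notin> fst p" "v \<notin> snd p" "v \<in> fst q" "v \<in> snd q"
      using avoid1 by auto
    then show "{fst p, snd p} \<inter> {fst q, snd q} = {}" by auto
  qed
  then show ?thesis
    using no_cycle_Un_insert_image[OF c1 c2 avoid1 avoid2] by (simp add: acyclic_matching_def)
qed

lemma critical_Un_insert_image:
  assumes "\<forall>S\<in>P. v \<notin> S \<longrightarrow> S \<in> P1" "\<forall>S\<in>P. v \<in> S \<longrightarrow> S - {v} \<in> P2"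
  shows "critical P (M1 \<union> map_prod (insert v) (insert v) ` M2)
           \<subseteq> critical P1 M1 \<union> insert v ` critical P2 M2"
proof
  fix S assume "S \<in> critical P (M1 \<union> map_prod (insert v) (insert v) ` M2)"
  then have S: "S \<in> P" "\<forall>p\<in>M1. S \<noteq> fst p \<and> S \<noteq> snd p"
    and lifted: "\<forall>p\<in>map_prod (insert v) (insert v) ` M2. S \<noteq> fst p \<and> S \<noteq> snd p"
    by (simp_all add: critical_def)
  show "S \<in> critical P1 M1 \<union> insert v ` critical P2 M2"
  proof (cases "v \<in> S")
    case True
    then have S_eq: "S = insert v (S - {v})" by blast
    have "S - {v} \<noteq> fst p \<and> S - {v} \<noteq> snd p" if "p \<in> M2" for p
    proof -
      have "S \<noteq> insert v (fst p) \<and> S \<noteq> insert v (snd p)"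
        using lifted that by auto
      then show ?thesis using S_eq by metis
    qed
    then have "S - {v} \<in> critical P2 M2"
      using assms(2) S(1) True by (simp add: critical_def)
    then show ?thesis using S_eq by blast
  next
    case False
    then show ?thesis using assms(1) S by (simp add: critical_def)
  qed
qed

lemma insert_Ind_non_neighbours:
  "symp E \<Longrightarrow> \<not> E v v \<Longrightarrow> S \<in> Ind (X - {y. E v y}) E \<Longrightarrow> insert v S \<in> Ind (insert v X) E"
  unfolding Ind_def by (blast dest: sympD)

lemma Ind_remove_vertex:
  "S \<in> Ind (insert v X) E \<Longrightarrow> v \<in> S \<Longrightarrow> v \<notin> X \<Longrightarrow> S - {v} \<in> Ind (X - {y. E v y}) E"
  unfolding Ind_def by blast

lemma cmin_insert_le:
  assumes "finite X" "v \<notin> X" "symp E" "irreflp E"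
  shows "cmin (insert v X) E \<le> cmin X E + cmin (X - {y. E v y}) E"
proof -
  let ?P = "Ind (insert v X) E" and ?P1 = "Ind X E" and ?P2 = "Ind (X - {y. E v y}) E"
  obtain M1 where M1: "acyclic_matching ?P1 M1" "card (critical ?P1 M1) = cmin X E"
    using assms(1) by (rule cmin_attained)
  obtain M2 where M2: "acyclic_matching ?P2 M2" "card (critical ?P2 M2) = cmin (X - {y. E v y}) E"
    using assms(1) by (rule cmin_attained[OF finite_Diff])
  let ?M = "M1 \<union> map_prod (insert v) (insert v) ` M2"
  have sub: "?P1 \<subseteq> ?P" and avoid: "\<forall>S\<in>?P1. v \<notin> S" "\<forall>S\<in>?P2. v \<notin> S"
    using assms(2) unfolding Ind_def by blast+
  have lift: "insert v ` ?P2 \<subseteq> ?P"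
    using insert_Ind_non_neighbours[OF assms(3) irreflpD[OF assms(4)]] by blast
  have "acyclic_matching ?P ?M"
    by (rule acyclic_matching_Un_insert_image[OF M1(1) M2(1) sub lift avoid])
  then have "cmin (insert v X) E \<le> card (critical ?P ?M)"
    using assms(1) by (intro cmin_le) simp_all
  also have "\<dots> \<le> card (critical ?P1 M1 \<union> insert v ` critical ?P2 M2)"
  proof (rule card_mono)
    show "finite (critical ?P1 M1 \<union> insert v ` critical ?P2 M2)"
      using assms(1) by (simp add: finite_critical)
    show "critical ?P ?M \<subseteq> critical ?P1 M1 \<union> insert v ` critical ?P2 M2"
      by (rule critical_Un_insert_image) (use assms(2) Ind_remove_vertex in \<open>auto simp: Ind_def\<close>)
  qed
  also have "\<dots> \<le> card (critical ?P1 M1) + card (critical ?P2 M2)"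
    by (rule order_trans[OF card_Un_le add_left_mono[OF card_image_le]])
       (use assms(1) in \<open>simp add: finite_critical\<close>)
  finally show ?thesis using M1(2) M2(2) by simp
qed

section \<open>Induced paths\<close>

definition induced_path :: "('a \<Rightarrow> 'a \<Rightarrow> bool) \<Rightarrow> 'a list \<Rightarrow> bool" where
  "induced_path E ps \<longleftrightarrow>
     (\<forall>i<length ps. \<forall>j<length ps. E (ps ! i) (ps ! j) \<longleftrightarrow> j = Suc i \<or> i = Suc j)"

lemma induced_path_drop: "induced_path E ps \<Longrightarrow> induced_path E (drop k ps)"
  unfolding induced_path_def by auto

lemma induced_path_tl: "induced_path E ps \<Longrightarrow> induced_path E (tl ps)"
  using induced_path_drop[of E ps 1] by (simp add: drop_Suc)

lemma induced_path_butlast: "induced_path E ps \<Longrightarrow> induced_path E (butlast ps)"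
  unfolding induced_path_def by (auto simp: nth_butlast)

lemma induced_path_Cons_adj:
  assumes "induced_path E (q # r)" "z \<in> set r"
  shows "E q z \<longleftrightarrow> z = hd r"
proof -
  have adj: "E q (r ! l) \<longleftrightarrow> l = 0" if "l < length r" for l
  proof -
    have "E q (r ! l) \<longleftrightarrow> E ((q # r) ! 0) ((q # r) ! Suc l)" by simp
    also have "\<dots> \<longleftrightarrow> l = 0" using assms(1) that unfolding induced_path_def by force
    finally show ?thesis .
  qed
  obtain l where l: "l < length r" "z = r ! l" using assms(2) by (auto simp: in_set_conv_nth)
  have "r \<noteq> []" using assms(2) by auto
  then have "E q (hd r)" using adj[of 0] by (simp add: hd_conv_nth)
  then show ?thesis using adj[OF l(1)] l \<open>r \<noteq> []\<close> by (auto simp: hd_conv_nth)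
qed

lemma path_minus_neighbours:
  assumes "induced_path E (q # r)" "distinct r" "W \<inter> set r = {}"
  shows "(W \<union> set r) - {y. E q y} = (W - {y. E q y}) \<union> set (tl r)"
proof (cases r)
  case (Cons x r')
  have "set r - {y. E q y} = set r'"
    using induced_path_Cons_adj[OF assms(1)] assms(2) Cons by auto
  then show ?thesis using assms(3) Cons by auto
qed simp

text \<open>An attached head is split off directly; an unattached head is a leaf, so splitting at
  its neighbour leaves a cone and deletes the next three vertices.\<close>
fun path_count :: "bool list \<Rightarrow> nat" where
  "path_count [] = 1"
| "path_count (True # w) = path_count w + path_count (tl w)"
| "path_count [False] = 0"
| "path_count (False # x # w) = path_count (tl w)"

lemma cmin_path_Cons_le:
  assumes "finite W" "symp E" "irreflp E" "distinct (q # r)" "induced_path E (q # r)"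
    and "W \<inter> set (q # r) = {}"
  shows "cmin (W \<union> set (q # r)) E \<le> cmin (W \<union> set r) E + cmin ((W - {y. E q y}) \<union> set (tl r)) E"
proof -
  have "W \<union> set (q # r) = insert q (W \<union> set r)" by simp
  moreover have "q \<notin> W \<union> set r" using assms(4,6) by auto
  moreover have "(W \<union> set r) - {y. E q y} = (W - {y. E q y}) \<union> set (tl r)"
    using assms(4-6) by (intro path_minus_neighbours) auto
  ultimately show ?thesis using cmin_insert_le[OF _ _ assms(2,3), of "W \<union> set r" q] assms(1) by simp
qed

lemma cmin_path_isolated_head:
  assumes "finite W" "symp E" "irreflp E" "distinct (q # x # r)" "induced_path E (q # x # r)"
    and "W \<inter> set (q # x # r) = {}" "\<forall>y\<in>W. \<not> E q y"
  shows "cmin (W \<union> set (q # x # r)) E \<le> cmin ((W - {y. E x y}) \<union> set (tl r)) E"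
proof -
  let ?X = "insert q (W \<union> set r)"
  have "W \<union> set (q # x # r) = insert x ?X" by auto
  moreover have "x \<notin> ?X" using assms(4,6) by auto
  moreover have "cmin ?X E = 0"
  proof (rule cmin_isolated_vertex)
    have "\<not> E q y" if "y \<in> set r" for y
      using induced_path_Cons_adj[OF assms(5), of y] that assms(4) by auto
    then show "\<forall>y\<in>?X. \<not> E q y" using assms(7) irreflpD[OF assms(3), of q] by auto
  qed (use assms(1,2) in auto)
  moreover have "?X - {y. E x y} = (W \<union> set r) - {y. E x y}"
    using induced_path_Cons_adj[OF assms(5), of x] assms(2) by (auto dest: sympD)
  moreover have "\<dots> = (W - {y. E x y}) \<union> set (tl r)"
    using assms(4-6) induced_path_tl[OF assms(5)] by (intro path_minus_neighbours) auto
  ultimately show ?thesis using cmin_insert_le[OF _ _ assms(2,3), of ?X x] assms(1) by simp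
qed

lemma cmin_path_le:
  fixes c :: real
  assumes "finite U" "symp E" "irreflp E" and bound: "\<And>W. W \<subseteq> U \<Longrightarrow> real (cmin W E) \<le> c"
  shows "W \<subseteq> U \<Longrightarrow> set ps \<inter> U = {} \<Longrightarrow> distinct ps \<Longrightarrow> induced_path E ps \<Longrightarrow>
    real (cmin (W \<union> set ps) E) \<le> c * real (path_count (map (\<lambda>x. \<exists>y\<in>U. E x y) ps))"
proof (induction "length ps" arbitrary: ps W rule: less_induct)
  case less
  let ?att = "\<lambda>x. \<exists>y\<in>U. E x y"
  have fin: "finite W" using less.prems(1) assms(1) finite_subset by blast
  have IH: "real (cmin (W' \<union> set (drop k ps)) E) \<le> c * real (path_count (map ?att (drop k ps)))"
    if "0 < k" "ps \<noteq> []" "W' \<subseteq> U" for k W'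
    using less.hyps[of "drop k ps" W'] that less.prems(2-4)
    by (auto simp: distinct_drop induced_path_drop dest: in_set_dropD)
  show ?case
  proof (cases ps)
    case Nil
    then show ?thesis using bound[OF less.prems(1)] by simp
  next
    case (Cons q r)
    have disj: "W \<inter> set (q # r) = {}" using less.prems(1,2) Cons by blast
    note path = less.prems(3,4)[unfolded Cons]
    consider (attached) "?att q" | (leaf) "\<not> ?att q" "r = []"
      | (inner) x r' where "\<not> ?att q" "r = x # r'"
      by (cases r) auto
    then show ?thesis
    proof cases
      case attached
      have "real (cmin (W \<union> set ps) E)
            \<le> real (cmin (W \<union> set (drop 1 ps)) E) + real (cmin ((W - {y. E q y}) \<union> set (drop 2 ps)) E)"
        using cmin_path_Cons_le[OF fin assms(2,3) path disj] Cons by (simp add: drop_Suc)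
      also have "\<dots> \<le> c * real (path_count (map ?att (drop 1 ps)))
          + c * real (path_count (map ?att (drop 2 ps)))"
        using IH[of 1 W] IH[of 2 "W - {y. E q y}"] less.prems(1) Cons by (intro add_mono) auto
      also have "\<dots> = c * real (path_count (map ?att ps))"
        using Cons attached by (simp add: drop_Suc map_tl distrib_left)
      finally show ?thesis .
    next
      case leaf
      then have "cmin (W \<union> set ps) E = 0"
        using less.prems(1) irreflpD[OF assms(3), of q] fin Cons
        by (intro cmin_isolated_vertex[OF _ _ _ assms(2)]) auto
      then show ?thesis using Cons leaf by simp
    next
      case inner
      have "\<forall>y\<in>W. \<not> E q y" using inner(1) less.prems(1) by blast
      then have "cmin (W \<union> set ps) E \<le> cmin ((W - {y. E x y}) \<union> set (tl r')) E"
        using cmin_path_isolated_head[OF fin assms(2,3)] path disj unfolding Cons inner by blast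
      then have "real (cmin (W \<union> set ps) E) \<le> real (cmin ((W - {y. E x y}) \<union> set (drop 3 ps)) E)"
        using Cons inner by (simp add: drop_Suc numeral_3_eq_3)
      also have "\<dots> \<le> c * real (path_count (map ?att (drop 3 ps)))"
        using IH[of 3 "W - {y. E x y}"] less.prems(1) Cons by auto
      also have "\<dots> = c * real (path_count (map ?att ps))"
        using Cons inner by (simp add: drop_Suc numeral_3_eq_3 map_tl)
      finally show ?thesis .
    qed
  qed
qed

section \<open>Transfer matrices\<close>

text \<open>The recursion of path_count as a three-state automaton: in state s the next s letters
  are skipped, and g weighs the final state.\<close>
fun runs :: "(nat \<Rightarrow> nat) \<Rightarrow> nat \<Rightarrow> bool list \<Rightarrow> nat" where
  "runs g s [] = g s"
| "runs g 0 (True # w) = runs g 0 w + runs g 1 w"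
| "runs g 0 (False # w) = runs g 2 w"
| "runs g (Suc s) (b # w) = runs g s w"

definition path_end :: "nat \<Rightarrow> nat" where
  "path_end s = of_bool (s \<le> 1)"

lemma path_end_simps [simp]:
  "path_end 0 = 1" "path_end (Suc 0) = 1" "path_end (Suc (Suc s)) = 0"
  by (simp_all add: path_end_def)

lemma runs_path_end_1: "runs path_end (Suc 0) w = runs path_end 0 (tl w)"
  by (cases w) simp_all

lemma path_count_eq_runs: "path_count w = runs path_end 0 w"
  by (induction w rule: path_count.induct)
     (simp_all add: runs_path_end_1 One_nat_def numeral_2_eq_2)

lemma runs_append: "runs g s (u @ w) = runs (\<lambda>s'. runs g s' w) s u"
proof (induction u arbitrary: s)
  case (Cons b u)
  then show ?case by (cases s; cases b) auto
qed simp

lemma runs_cong: "(\<And>s. s < 3 \<Longrightarrow> g s = h s) \<Longrightarrow> s < 3 \<Longrightarrow> runs g s w = runs h s w"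
proof (induction w arbitrary: s)
  case (Cons b w)
  then show ?case by (cases s; cases b) (auto simp: less_Suc_eq numeral_3_eq_3)
qed simp

definition unit_vec :: "nat \<Rightarrow> nat \<Rightarrow> nat" where
  "unit_vec c s = of_bool (s = c)"

lemma runs_linear: "s < 3 \<Longrightarrow> runs g s w = (\<Sum>c<3. g c * runs (unit_vec c) s w)"
proof (induction w arbitrary: s)
  case Nil
  then show ?case by (auto simp: unit_vec_def numeral_3_eq_3 lessThan_Suc less_Suc_eq)
next
  case (Cons b w)
  then show ?case
    by (cases s; cases b) (auto simp: less_Suc_eq numeral_3_eq_3 sum.distrib algebra_simps)
qed

lemma runs_zero: "runs (\<lambda>_. 0) s w = 0"
proof (induction w arbitrary: s)
  case (Cons b w)
  then show ?case by (cases s; cases b) auto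
qed simp

lemma runs_unit_2_ends_True:
  assumes "v = [] \<or> last v" "s < 2"
  shows "runs (unit_vec 2) s v = 0"
proof (cases v rule: rev_cases)
  case (snoc u b)
  then have "b" using assms(1) by simp
  have "runs (unit_vec 2) s v = runs (\<lambda>s'. runs (unit_vec 2) s' [True]) s u"
    by (simp add: snoc \<open>b\<close> runs_append)
  also have "\<dots> = runs (\<lambda>_. 0) s u"
    using assms(2) by (intro runs_cong) (auto simp: unit_vec_def less_Suc_eq numeral_3_eq_3)
  finally show ?thesis by (simp add: runs_zero)
qed (use assms in \<open>simp add: unit_vec_def\<close>)

lemma runs_FFF: "s < 3 \<Longrightarrow> runs g s (False # False # False # w) = runs g s w"
  by (auto simp: less_Suc_eq numeral_3_eq_3 numeral_2_eq_2)

type_synonym mat2 = "bool \<Rightarrow> bool \<Rightarrow> nat"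

definition mat_mult :: "mat2 \<Rightarrow> mat2 \<Rightarrow> mat2" where
  "mat_mult X Y a b = X a False * Y False b + X a True * Y True b"

definition mat_le :: "mat2 \<Rightarrow> mat2 \<Rightarrow> bool" where
  "mat_le X Y \<longleftrightarrow> (\<forall>a b. X a b \<le> Y a b)"

definition trace :: "mat2 \<Rightarrow> nat" where
  "trace X = X False False + X True True"

definition id_mat :: mat2 where
  "id_mat a b = of_bool (a = b)"

definition fib_mat :: mat2 where
  "fib_mat a b = of_bool (\<not> (a \<and> b))"

text \<open>twist e f X is J^e X J^f for the swap matrix J.\<close>
definition twist :: "bool \<Rightarrow> bool \<Rightarrow> mat2 \<Rightarrow> mat2" where
  "twist e f X a b = X (a \<noteq> e) (b \<noteq> f)"

fun fib_pow :: "nat \<Rightarrow> mat2" where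
  "fib_pow 0 = id_mat"
| "fib_pow (Suc k) = mat_mult (fib_pow k) fib_mat"

text \<open>Index False/True stands for state 0/1: after a letter True the automaton is never in
  state 2, so words ending in True compose as 2\<times>2 matrices (word_mat_append).\<close>
definition word_mat :: "bool list \<Rightarrow> mat2" where
  "word_mat w a b = runs (unit_vec (of_bool b)) (of_bool a) w"

lemma mat_le_trans: "mat_le X Y \<Longrightarrow> mat_le Y Z \<Longrightarrow> mat_le X Z"
  unfolding mat_le_def using order_trans by blast

lemma mat_le_mult_right: "mat_le X Y \<Longrightarrow> mat_le (mat_mult X Z) (mat_mult Y Z)"
  by (simp add: mat_le_def mat_mult_def add_mono mult_right_mono)

lemma mat_le_twist: "mat_le X Y \<Longrightarrow> mat_le (twist e f X) (twist e f Y)"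
  by (simp add: mat_le_def twist_def)

lemma twist_twist: "twist e f (twist e' f' X) = twist (e \<noteq> e') (f \<noteq> f') X"
  unfolding twist_def by (rule ext)+ (cases e; cases e'; cases f; cases f'; simp)

lemma trace_mono: "mat_le X Y \<Longrightarrow> trace X \<le> trace Y"
  by (simp add: mat_le_def trace_def add_mono)

lemma fib_pow_entries:
  "fib_pow k False False = fib (Suc k)" "fib_pow k False True = fib k"
  "fib_pow k True False = fib k" "fib_pow k True True = fib (Suc k) - fib k"
proof (induction k)
  case 0 show "fib_pow 0 False False = fib (Suc 0)" "fib_pow 0 False True = fib 0"
    "fib_pow 0 True False = fib 0" "fib_pow 0 True True = fib (Suc 0) - fib 0"
    by (simp_all add: id_mat_def)
next
  case (Suc k)
  have "fib k \<le> fib (Suc k)" by (rule fib_Suc_mono)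
  with Suc.IH show "fib_pow (Suc k) False False = fib (Suc (Suc k))"
    "fib_pow (Suc k) False True = fib (Suc k)" "fib_pow (Suc k) True False = fib (Suc k)"
    "fib_pow (Suc k) True True = fib (Suc (Suc k)) - fib (Suc k)"
    by (simp_all add: mat_mult_def fib_mat_def)
qed

lemma word_mat_append:
  assumes "v = [] \<or> last v"
  shows "word_mat (v @ w) = mat_mult (word_mat v) (word_mat w)"
proof (rule ext)+
  fix a b
  have a: "of_bool a < (3::nat)" "of_bool a < (2::nat)" by simp_all
  have "word_mat (v @ w) a b = runs (\<lambda>s. runs (unit_vec (of_bool b)) s w) (of_bool a) v"
    by (simp add: word_mat_def runs_append)
  also have "\<dots> = (\<Sum>c<3. runs (unit_vec (of_bool b)) c w * runs (unit_vec c) (of_bool a) v)"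
    by (rule runs_linear[OF a(1)])
  also have "\<dots> = runs (unit_vec (of_bool b)) 0 w * runs (unit_vec 0) (of_bool a) v
      + runs (unit_vec (of_bool b)) 1 w * runs (unit_vec 1) (of_bool a) v"
    using runs_unit_2_ends_True[OF assms a(2)] by (simp add: numeral_3_eq_3 numeral_2_eq_2)
  also have "\<dots> = mat_mult (word_mat v) (word_mat w) a b"
    by (simp add: mat_mult_def word_mat_def)
  finally show "word_mat (v @ w) a b = mat_mult (word_mat v) (word_mat w) a b" .
qed

lemma word_mat_Nil: "word_mat [] = id_mat"
  by (simp add: fun_eq_iff word_mat_def unit_vec_def id_mat_def)

lemma word_mat_block:
  "word_mat (replicate j False @ [True]) \<in> {fib_mat, twist True True fib_mat, id_mat}"
proof (induction j rule: less_induct)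
  case (less j)
  consider "j = 0" | "j = 1" | "j = 2" | i where "j = Suc (Suc (Suc i))"
    by (metis One_nat_def Suc_1 not0_implies_Suc)
  then show ?case
  proof cases
    case 4
    have "word_mat (replicate j False @ [True]) = word_mat (replicate i False @ [True])"
      unfolding word_mat_def 4 by (simp add: fun_eq_iff runs_FFF)
    then show ?thesis using less.IH[of i] 4 by simp
  qed (auto simp: fun_eq_iff word_mat_def unit_vec_def fib_mat_def twist_def id_mat_def
        numeral_2_eq_2)
qed

lemma fib_pow_True_le_False: "0 < k \<Longrightarrow> fib_pow k x True \<le> fib_pow k x False"
proof (cases x)
  case True
  assume "0 < k"
  then obtain k0 where "k = Suc k0" using gr0_implies_Suc by blast
  then have "fib (Suc k) \<le> 2 * fib k" using fib_Suc_mono[of k0] by simp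
  then show ?thesis using True by (simp add: fib_pow_entries)
qed (simp add: fib_pow_entries fib_Suc_mono)

lemma twist_fib_pow_mult_fib_mat:
  "\<exists>e' f' k'. k' \<le> Suc k \<and> mat_le (mat_mult (twist e f (fib_pow k)) fib_mat) (twist e' f' (fib_pow k'))"
proof (cases f)
  case False
  have "mat_mult (twist e f (fib_pow k)) fib_mat = twist e False (fib_pow (Suc k))"
    using False by (simp add: fun_eq_iff mat_mult_def twist_def)
  then show ?thesis by (intro exI[of _ e] exI[of _ False] exI[of _ "Suc k"]) (simp add: mat_le_def)
next
  case True
  show ?thesis
  proof (cases "k = 0")
    case True
    have "mat_mult (twist e f (fib_pow k)) fib_mat = twist (\<not> e) False (fib_pow 1)"
      using \<open>f\<close> True by (intro ext) (simp add: mat_mult_def twist_def id_mat_def fib_mat_def)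
    then show ?thesis by (intro exI[of _ "\<not> e"] exI[of _ False] exI[of _ 1]) (simp add: mat_le_def)
  next
    case False
    \<comment> \<open>X F has columns (x0 + x1, x0), and column True of fib_pow k lies below column False\<close>
    have "mat_le (mat_mult (twist e f (fib_pow k)) fib_mat) (twist e False (fib_pow (Suc k)))"
      unfolding mat_le_def
    proof (intro allI)
      fix a b
      have "fib_pow k (a \<noteq> e) True \<le> fib_pow k (a \<noteq> e) False"
        using False by (intro fib_pow_True_le_False) simp
      then show "mat_mult (twist e f (fib_pow k)) fib_mat a b \<le> twist e False (fib_pow (Suc k)) a b"
        using \<open>f\<close> by (cases b) (simp_all add: mat_mult_def twist_def fib_mat_def)
    qed
    then show ?thesis by blast
  qed
qed

definition dominated :: "nat \<Rightarrow> mat2 \<Rightarrow> bool" where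
  "dominated k X \<longleftrightarrow> (\<exists>e f k'. k' \<le> k \<and> mat_le X (twist e f (fib_pow k')))"

lemma dominatedI: "k' \<le> k \<Longrightarrow> mat_le X (twist e f (fib_pow k')) \<Longrightarrow> dominated k X"
  unfolding dominated_def by blast

lemma dominated_mult_fib_mat: "dominated k X \<Longrightarrow> dominated (Suc k) (mat_mult X fib_mat)"
proof -
  assume "dominated k X"
  then obtain e f k' where k': "k' \<le> k" "mat_le X (twist e f (fib_pow k'))"
    by (auto simp: dominated_def)
  obtain e' f' k'' where k'': "k'' \<le> Suc k'"
    "mat_le (mat_mult (twist e f (fib_pow k')) fib_mat) (twist e' f' (fib_pow k''))"
    using twist_fib_pow_mult_fib_mat by blast
  show ?thesis
    using k'(1) k''(1) mat_le_trans[OF mat_le_mult_right[OF k'(2)] k''(2)]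
    by (intro dominatedI[of k'' "Suc k"]) simp_all
qed

lemma mat_mult_twist_flip:
  "mat_mult (twist e f X) (twist True True Y) = twist e True (mat_mult (twist False (\<not> f) X) Y)"
  by (cases f) (simp_all add: fun_eq_iff mat_mult_def twist_def add.commute)

lemma dominated_mult_block:
  assumes "dominated k X"
  shows "dominated (Suc k) (mat_mult X (word_mat (replicate j False @ [True])))"
proof -
  consider "word_mat (replicate j False @ [True]) = fib_mat"
    | "word_mat (replicate j False @ [True]) = twist True True fib_mat"
    | "word_mat (replicate j False @ [True]) = id_mat"
    using word_mat_block by blast
  then show ?thesis
  proof cases
    case 1
    then show ?thesis using dominated_mult_fib_mat[OF assms] by simp
  next
    case 2
    obtain e f k' where k': "k' \<le> k" "mat_le X (twist e f (fib_pow k'))"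
      using assms by (auto simp: dominated_def)
    obtain e' f' k'' where k'': "k'' \<le> Suc k'"
      "mat_le (mat_mult (twist False (\<not> f) (fib_pow k')) fib_mat) (twist e' f' (fib_pow k''))"
      using twist_fib_pow_mult_fib_mat by blast
    have "mat_le (mat_mult X (twist True True fib_mat))
        (twist e True (mat_mult (twist False (\<not> f) (fib_pow k')) fib_mat))"
      using mat_le_mult_right[OF k'(2), of "twist True True fib_mat"] by (simp add: mat_mult_twist_flip)
    moreover have "mat_le (twist e True (mat_mult (twist False (\<not> f) (fib_pow k')) fib_mat))
        (twist (e \<noteq> e') (True \<noteq> f') (fib_pow k''))"
      using mat_le_twist[OF k''(2), of e True] by (simp add: twist_twist)
    ultimately have "mat_le (mat_mult X (twist True True fib_mat))
        (twist (e \<noteq> e') (True \<noteq> f') (fib_pow k''))"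
      by (rule mat_le_trans)
    then show ?thesis
      using 2 k'(1) k''(1) by (intro dominatedI[of k'' "Suc k"]) simp_all
  next
    case 3
    have "mat_mult X id_mat = X" by (simp add: fun_eq_iff mat_mult_def id_mat_def)
    then show ?thesis using 3 assms unfolding dominated_def by (auto intro: le_SucI)
  qed
qed

definition blocks :: "nat list \<Rightarrow> bool list" where
  "blocks js = concat (map (\<lambda>j. replicate j False @ [True]) js)"

lemma blocks_Nil_or_last: "blocks js = [] \<or> last (blocks js)"
  by (cases js rule: rev_cases) (auto simp: blocks_def)

lemma dominated_word_mat_blocks: "dominated (length js) (word_mat (blocks js))"
proof (induction js rule: rev_induct)
  case Nil
  have "mat_le id_mat (twist False False (fib_pow 0))"
    by (simp add: mat_le_def twist_def)
  then show ?case by (auto simp: dominated_def blocks_def word_mat_Nil)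
next
  case (snoc j js)
  have "word_mat (blocks (js @ [j])) = mat_mult (word_mat (blocks js)) (word_mat (replicate j False @ [True]))"
    using word_mat_append[OF blocks_Nil_or_last] by (simp add: blocks_def)
  then show ?case using dominated_mult_block[OF snoc.IH] by simp
qed

lemma word_eq_blocks_append: "\<exists>js j. w = blocks js @ replicate j False"
proof (induction w rule: rev_induct)
  case Nil
  show ?case by (rule exI[of _ "[]"], rule exI[of _ 0]) (simp add: blocks_def)
next
  case (snoc b w)
  then obtain js j where w: "w = blocks js @ replicate j False" by blast
  show ?case
  proof (cases b)
    case True
    then show ?thesis using w by (intro exI[of _ "js @ [j]"] exI[of _ 0]) (simp add: blocks_def)
  next
    case False
    then show ?thesis using w
      by (intro exI[of _ js] exI[of _ "Suc j"]) (simp add: replicate_append_same[symmetric])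
  qed
qed

lemma length_filter_blocks: "length (filter id (blocks js)) = length js"
  by (induction js) (simp_all add: blocks_def)

lemma lucas_mono: "1 \<le> a \<Longrightarrow> a \<le> b \<Longrightarrow> lucas a \<le> lucas b"
  unfolding lucas_def by (intro add_mono fib_mono) auto

lemma trace_twist_fib_pow_le_lucas:
  assumes "k \<le> K" "2 \<le> K"
  shows "trace (twist e f (fib_pow k)) \<le> lucas K"
proof -
  obtain K0 where K0: "K = Suc (Suc K0)" using assms(2) by (metis add_2_eq_Suc le_iff_add)
  have lucas_K: "lucas K = fib (Suc K0) + fib (Suc (Suc (Suc K0)))"
    by (simp add: K0 lucas_def)
  have "2 * fib (Suc k) - fib k \<le> lucas K"
  proof (cases k)
    case 0
    then show ?thesis using lucas_K fib_neq_0_nat[of "Suc K0"] by simp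
  next
    case (Suc k0)
    then have "2 * fib (Suc k) - fib k = lucas k" by (simp add: lucas_def)
    then show ?thesis using lucas_mono[of k K] assms(1) Suc by simp
  qed
  moreover have "2 * fib k \<le> lucas K"
    using fib_mono[OF assms(1)] fib_Suc_mono[of K0] lucas_K by (simp add: K0)
  ultimately show ?thesis
    by (cases e; cases f) (simp_all add: trace_def twist_def fib_pow_entries)
qed

lemma trace_dominated_le_lucas: "dominated k X \<Longrightarrow> k \<le> K \<Longrightarrow> 2 \<le> K \<Longrightarrow> trace X \<le> lucas K"
  unfolding dominated_def
  by (metis order_trans trace_mono trace_twist_fib_pow_le_lucas)

lemma path_count_cycle_eq_trace:
  assumes "2 \<le> length t"
  shows "path_count t + path_count (butlast (tl t)) = trace (word_mat (t @ [True]))"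
proof -
  \<comment> \<open>the final True is the split vertex; each diagonal entry is one branch of the split\<close>
  have "word_mat (t @ [True]) False False = runs (\<lambda>s. runs (unit_vec 0) s [True]) 0 t"
    by (simp add: word_mat_def runs_append)
  also have "\<dots> = path_count t" unfolding path_count_eq_runs
    by (rule runs_cong) (auto simp: unit_vec_def less_Suc_eq numeral_3_eq_3)
  finally have diag_False: "word_mat (t @ [True]) False False = path_count t" .
  obtain x u y where t: "t = x # u @ [y]"
    using assms by (cases t; cases "tl t" rule: rev_cases) auto
  have "word_mat (t @ [True]) True True = runs (\<lambda>s. runs (unit_vec 1) s [y, True]) 0 u"
    by (simp add: word_mat_def runs_append t)
  also have "\<dots> = path_count u" unfolding path_count_eq_runs
    by (rule runs_cong) (cases y; auto simp: unit_vec_def less_Suc_eq numeral_3_eq_3 numeral_2_eq_2)+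
  finally have diag_True: "word_mat (t @ [True]) True True = path_count (butlast (tl t))"
    by (simp add: t)
  show ?thesis using diag_False diag_True by (simp add: trace_def)
qed

lemma path_count_all_False: "\<forall>b\<in>set w. \<not> b \<Longrightarrow> path_count w \<le> 1"
proof (induction w rule: path_count.induct)
  case (4 x w)
  then have "\<forall>b\<in>set (tl w). \<not> b" by (cases w) auto
  then show ?case using 4(1) by simp
qed simp_all

lemma path_count_cycle_le_lucas:
  assumes "2 \<le> length t" "2 \<le> K" "length (filter id (b # t)) \<le> K" "b \<or> (\<forall>x\<in>set t. \<not> x)"
  shows "path_count t + path_count (butlast (tl t)) \<le> lucas K"
proof (cases b)
  case True
  obtain js j where "t = blocks js @ replicate j False"
    using word_eq_blocks_append by blast
  then have blocks: "t @ [True] = blocks (js @ [j])" by (simp add: blocks_def)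
  have "length (js @ [j]) \<le> K"
    using assms(3) True length_filter_blocks[of "js @ [j]"] unfolding blocks[symmetric] by simp
  then have "trace (word_mat (t @ [True])) \<le> lucas K"
    unfolding blocks by (rule trace_dominated_le_lucas[OF dominated_word_mat_blocks _ assms(2)])
  then show ?thesis using path_count_cycle_eq_trace[OF assms(1)] by simp
next
  case False
  then have t: "\<forall>x\<in>set t. \<not> x" using assms(4) by simp
  have "set (butlast (tl t)) \<subseteq> set t"
    by (cases t) (auto dest: in_set_butlastD)
  then have "\<forall>x\<in>set (butlast (tl t)). \<not> x" using t by blast
  then have "path_count t \<le> 1" "path_count (butlast (tl t)) \<le> 1"
    using t path_count_all_False by blast+
  moreover have "3 \<le> lucas K"
    using lucas_mono[OF _ assms(2)] by (simp add: lucas_def numeral_3_eq_3 numeral_2_eq_2)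
  ultimately show ?thesis by linarith
qed

section \<open>Induced cycles\<close>

definition cyclic_order :: "('a \<Rightarrow> 'a \<Rightarrow> bool) \<Rightarrow> 'a list \<Rightarrow> bool" where
  "cyclic_order E vs \<longleftrightarrow> (\<forall>i<length vs. \<forall>j<length vs.
     E (vs ! i) (vs ! j) \<longleftrightarrow> j = Suc i mod length vs \<or> i = Suc j mod length vs)"

lemma Suc_mod_eq_iff: "a < m \<Longrightarrow> b < m \<Longrightarrow> Suc a mod m = Suc b mod m \<longleftrightarrow> a = b"
  using mod_Suc[of a m] mod_Suc[of b m] by (auto split: if_splits)

lemma cyclic_order_rotate1: "cyclic_order E vs \<Longrightarrow> cyclic_order E (rotate1 vs)"
  unfolding cyclic_order_def
proof (intro allI impI)
  fix i j assume vs: "\<forall>i<length vs. \<forall>j<length vs.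
      E (vs ! i) (vs ! j) \<longleftrightarrow> j = Suc i mod length vs \<or> i = Suc j mod length vs"
    and ij: "i < length (rotate1 vs)" "j < length (rotate1 vs)"
  let ?m = "length vs"
  have m: "i < ?m" "j < ?m" "Suc i mod ?m < ?m" "Suc j mod ?m < ?m"
    using ij by (simp_all, (intro mod_less_divisor, linarith)+)
  have "E (rotate1 vs ! i) (rotate1 vs ! j) \<longleftrightarrow> E (vs ! (Suc i mod ?m)) (vs ! (Suc j mod ?m))"
    using m by (simp add: nth_rotate1)
  also have "\<dots> \<longleftrightarrow> Suc j mod ?m = Suc (Suc i mod ?m) mod ?m \<or> Suc i mod ?m = Suc (Suc j mod ?m) mod ?m"
    using vs m(3,4) by blast
  also have "\<dots> \<longleftrightarrow> j = Suc i mod ?m \<or> i = Suc j mod ?m"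
    using m by (simp add: Suc_mod_eq_iff)
  finally show "E (rotate1 vs ! i) (rotate1 vs ! j) \<longleftrightarrow>
      j = Suc i mod length (rotate1 vs) \<or> i = Suc j mod length (rotate1 vs)" by simp
qed

lemma cyclic_order_rotate: "cyclic_order E vs \<Longrightarrow> cyclic_order E (rotate n vs)"
  by (induction n) (simp_all add: cyclic_order_rotate1)

lemma cyclic_order_Cons:
  assumes cyc: "cyclic_order E (v # t)" and "distinct t" "2 \<le> length t"
  shows "induced_path E t" "\<forall>z\<in>set t. E v z \<longleftrightarrow> z = hd t \<or> z = last t"
proof -
  let ?m = "Suc (length t)"
  have adj: "E ((v # t) ! i) ((v # t) ! j) \<longleftrightarrow> j = Suc i mod ?m \<or> i = Suc j mod ?m"
    if "i < ?m" "j < ?m" for i j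
    using cyc that unfolding cyclic_order_def by simp
  have succ: "Suc l' = Suc (Suc l) mod ?m \<longleftrightarrow> l' = Suc l" if "l < length t" "l' < length t" for l l'
  proof (cases "Suc (Suc l) < ?m")
    case False
    then have "Suc (Suc l) = ?m" using that(1) by simp
    then show ?thesis using that by simp
  qed simp
  show "induced_path E t"
    unfolding induced_path_def
  proof (intro allI impI)
    fix l l' assume l: "l < length t" "l' < length t"
    have "E (t ! l) (t ! l') \<longleftrightarrow> E ((v # t) ! Suc l) ((v # t) ! Suc l')" by simp
    also have "\<dots> \<longleftrightarrow> l' = Suc l \<or> l = Suc l'"
      using adj[of "Suc l" "Suc l'"] succ[OF l] succ[OF l(2,1)] l by simp
    finally show "E (t ! l) (t ! l') \<longleftrightarrow> l' = Suc l \<or> l = Suc l'" .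
  qed
  show "\<forall>z\<in>set t. E v z \<longleftrightarrow> z = hd t \<or> z = last t"
  proof
    fix z assume "z \<in> set t"
    then obtain l where l: "l < length t" "z = t ! l" by (auto simp: in_set_conv_nth)
    have "E v z \<longleftrightarrow> E ((v # t) ! 0) ((v # t) ! Suc l)" using l by simp
    also have "\<dots> \<longleftrightarrow> l = 0 \<or> l = length t - 1"
      using adj[of 0 "Suc l"] l assms(3) by (cases "Suc (Suc l) < ?m") auto
    also have "\<dots> \<longleftrightarrow> z = hd t \<or> z = last t"
    proof -
      have "t \<noteq> []" using assms(3) by auto
      then have "hd t = t ! 0" "last t = t ! (length t - 1)"
        by (simp_all add: hd_conv_nth last_conv_nth)
      moreover have "z = t ! 0 \<longleftrightarrow> l = 0"
        using nth_eq_iff_index_eq[OF assms(2) l(1), of 0] \<open>t \<noteq> []\<close> l(2) by simp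
      moreover have "z = t ! (length t - 1) \<longleftrightarrow> l = length t - 1"
        using nth_eq_iff_index_eq[OF assms(2) l(1), of "length t - 1"] \<open>t \<noteq> []\<close> l(2) by simp
      ultimately show ?thesis by simp
    qed
    finally show "E v z \<longleftrightarrow> z = hd t \<or> z = last t" .
  qed
qed

lemma induced_cycle_split:
  assumes "induced_cycle V E C" "v \<in> C"
  obtains t where "distinct (v # t)" "set (v # t) = C" "2 \<le> length t" "induced_path E t"
    "\<forall>z\<in>set t. E v z \<longleftrightarrow> z = hd t \<or> z = last t"
proof -
  obtain vs where vs: "distinct vs" "set vs = C" "3 \<le> length vs" "cyclic_order E vs"
    using assms(1) unfolding induced_cycle_def cyclic_order_def by auto
  then obtain i where i: "i < length vs" "vs ! i = v" using assms(2) by (auto simp: in_set_conv_nth)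
  define ws where "ws = rotate i vs"
  have ws: "distinct ws" "set ws = C" "3 \<le> length ws" "cyclic_order E ws"
    using vs by (simp_all add: ws_def cyclic_order_rotate)
  have "vs \<noteq> []" using vs(3) by auto
  then have "hd ws = v" using i by (simp add: ws_def hd_rotate_conv_nth)
  then obtain t where "ws = v # t" using ws(3) by (cases ws) auto
  then show ?thesis using that ws cyclic_order_Cons[of E v t] by auto
qed

lemma cycle_minus_neighbours:
  assumes "distinct t" "2 \<le> length t" "\<forall>z\<in>set t. E v z \<longleftrightarrow> z = hd t \<or> z = last t"
    and "W \<inter> set t = {}"
  shows "(W \<union> set t) - {y. E v y} = (W - {y. E v y}) \<union> set (butlast (tl t))"
proof -
  obtain x u y where t: "t = x # u @ [y]"
    using assms(2) by (cases t; cases "tl t" rule: rev_cases) auto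
  then have "set t - {y. E v y} = set u" using assms(1,3) by auto
  then show ?thesis using assms(4) t by auto
qed

lemma cmin_cycle_le:
  fixes c :: real
  assumes "simple_graph V E" "C \<subseteq> V" "distinct (v # t)" "set (v # t) = C" "2 \<le> length t"
    and "induced_path E t" "\<forall>z\<in>set t. E v z \<longleftrightarrow> z = hd t \<or> z = last t"
    and bound: "\<And>W. W \<subseteq> V - C \<Longrightarrow> real (cmin W E) \<le> c"
  defines "att \<equiv> \<lambda>x. \<exists>y\<in>V - C. E x y"
  shows "real (cmin V E) \<le> c * real (path_count (map att t) + path_count (butlast (tl (map att t))))"
proof -
  have fin: "finite V" and sym: "symp E" and irr: "irreflp E"
    using assms(1) unfolding simple_graph_def by (auto intro: sympI irreflpI)
  let ?U = "V - C" and ?mid = "butlast (tl t)"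
  have U: "finite ?U" "set t \<inter> ?U = {}" using fin assms(4) by auto
  have "V = insert v (?U \<union> set t)" "v \<notin> ?U \<union> set t" using assms(2-4) by auto
  moreover have "(?U \<union> set t) - {y. E v y} = (?U - {y. E v y}) \<union> set ?mid"
    using assms(3,5,7) U(2) by (intro cycle_minus_neighbours) auto
  ultimately have "cmin V E \<le> cmin (?U \<union> set t) E + cmin ((?U - {y. E v y}) \<union> set ?mid) E"
    using cmin_insert_le[OF _ _ sym irr, of "?U \<union> set t" v] U(1) by simp
  moreover have "real (cmin (?U \<union> set t) E) \<le> c * real (path_count (map att t))"
    using cmin_path_le[OF U(1) sym irr bound order_refl U(2)] assms(3,6) unfolding att_def by simp
  moreover have "real (cmin ((?U - {y. E v y}) \<union> set ?mid) E) \<le> c * real (path_count (map att ?mid))"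
  proof -
    have "set ?mid \<subseteq> set t" by (cases t) (auto dest: in_set_butlastD)
    then show ?thesis
      using cmin_path_le[OF U(1) sym irr bound, of "?U - {y. E v y}" ?mid] U(2) assms(3,6)
      unfolding att_def by (auto simp: distinct_butlast distinct_tl induced_path_butlast induced_path_tl)
  qed
  ultimately show ?thesis by (simp add: map_butlast map_tl distrib_left)
qed

theorem theorem3p4:
  fixes V C :: "'a set" and E :: "'a \<Rightarrow> 'a \<Rightarrow> bool" and n :: nat and c :: real
  assumes "simple_graph V E"
    and "induced_cycle V E C"
    and "n \<ge> 2"
    and "card {x \<in> C. \<exists>y \<in> V - C. E x y} \<le> n"
    and "\<And>W. W \<subseteq> V - C \<Longrightarrow> real (cmin W E) \<le> c"
  shows "real (cmin V E) \<le> c * real (lucas n)"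
proof -
  let ?att = "\<lambda>x. \<exists>y\<in>V - C. E x y"
  have "C \<subseteq> V" "C \<noteq> {}" using assms(2) unfolding induced_cycle_def by force+
  then obtain v where v: "v \<in> C" "?att v \<or> (\<forall>z\<in>C. \<not> ?att z)" by blast
  obtain t where t: "distinct (v # t)" "set (v # t) = C" "2 \<le> length t" "induced_path E t"
    "\<forall>z\<in>set t. E v z \<longleftrightarrow> z = hd t \<or> z = last t"
    using induced_cycle_split[OF assms(2) v(1)] by blast
  have "length (filter id (map ?att xs)) = length (filter ?att xs)" for xs
    by (induction xs) auto
  also have "length (filter ?att (v # t)) = card (set (filter ?att (v # t)))"
    by (rule distinct_card[symmetric]) (rule distinct_filter[OF t(1)])
  also have "set (filter ?att (v # t)) = {x \<in> C. ?att x}"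
    by (simp only: set_filter t(2))
  finally have "length (filter id (map ?att (v # t))) \<le> n" using assms(4) by (rule ord_eq_le_trans)
  moreover have "?att v \<or> (\<forall>x\<in>set (map ?att t). \<not> x)" using v(2) t(2) by auto
  ultimately have "path_count (map ?att t) + path_count (butlast (tl (map ?att t))) \<le> lucas n"
    using assms(3) t(3) by (intro path_count_cycle_le_lucas) simp_all
  moreover have "0 \<le> c" using assms(5)[of "{}"] by simp
  ultimately show ?thesis
    using cmin_cycle_le[OF assms(1) \<open>C \<subseteq> V\<close> t assms(5)]
    by (meson mult_left_mono of_nat_le_iff order_trans)
qed

end
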